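(* Let $\delta:\,]0,+\infty[\to\mathbb R$ be nonnegative, bounded and continuously differentiable with $\lim_{r\downarrow0}\sqrt r\,\delta'(r)=0$ (so that $u\mapsto\delta(u^2)$ extends to a continuously differentiable function on $\mathbb R$). Consider the system $$u''+\delta(u^2)u^2u'=\frac{Eu}{2},\qquad E'=-4\delta(u^2)(u')^2,$$ and the invariant manifold $\mathcal M=\{(u,u',E)\in\mathbb R\times\mathbb R\times\mathbb R:\ 2(u')^2-Eu^2=1\}$. Let $(u,E):\,]A,0]\to\mathbb R^2$ be a solution of this system lying on $\mathcal M$ and maximal to the left. If $A>-\infty$, then there exists $s_1\in\,]A,0]$ such that $u'(s)u(s)<0$ for all $s\in\,]A,s_1]$.
   Context: Primes denote derivatives with respect to the independent variable $s$. Maximal to the left means the solution admits no extension to an interval $]\hat A,0]$ with $\hat A<A$. *)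

theory Defs
  imports "HOL-Analysis.Analysis"
begin

text \<open>Extension of delta to r = 0 by its right limit (exists under the hypotheses),
  so that u maps to delta(u^2) is defined on all of the reals.\<close>
definition dext :: "(real \<Rightarrow> real) \<Rightarrow> real \<Rightarrow> real" where
  "dext \<delta> r = (if r > 0 then \<delta> r else Lim (at_right 0) \<delta>)"

definition is_sol :: "(real \<Rightarrow> real) \<Rightarrow> real \<Rightarrow> (real \<Rightarrow> real) \<Rightarrow> (real \<Rightarrow> real) \<Rightarrow> (real \<Rightarrow> real) \<Rightarrow> bool" where
  "is_sol \<delta> a u v E \<longleftrightarrow>
     (\<forall>s\<in>{a<..0}.
        (u has_real_derivative v s) (at s within {a<..0}) \<and>
        (v has_real_derivative (E s * u s / 2 - dext \<delta> ((u s)\<^sup>2) * (u s)\<^sup>2 * v s)) (at s within {a<..0}) \<and>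
        (E has_real_derivative (- 4 * dext \<delta> ((u s)\<^sup>2) * (v s)\<^sup>2)) (at s within {a<..0}))"

definition on_M :: "real \<Rightarrow> (real \<Rightarrow> real) \<Rightarrow> (real \<Rightarrow> real) \<Rightarrow> (real \<Rightarrow> real) \<Rightarrow> bool" where
  "on_M a u v E \<longleftrightarrow> (\<forall>s\<in>{a<..0}. 2 * (v s)\<^sup>2 - E s * (u s)\<^sup>2 = 1)"

definition maximal_left :: "(real \<Rightarrow> real) \<Rightarrow> real \<Rightarrow> (real \<Rightarrow> real) \<Rightarrow> (real \<Rightarrow> real) \<Rightarrow> (real \<Rightarrow> real) \<Rightarrow> bool" where
  "maximal_left \<delta> a u v E \<longleftrightarrow>
     \<not> (\<exists>a' u2 v2 E2. a' < a \<and> is_sol \<delta> a' u2 v2 E2 \<and>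
          (\<forall>s\<in>{a<..0}. u2 s = u s \<and> v2 s = v s \<and> E2 s = E s))"

end

theory Submission
  imports Defs "HOL-Analysis.Analysis" "HOL-Real_Asymp.Real_Asymp"
begin

(* Along a solution E' = -4 delta(u^2) u'^2 <= 0, so E is nonincreasing. Suppose u u' >= 0 at
   points arbitrarily close to A. Then E is bounded above: otherwise E(s0) > 0 for some s0, hence
   E > 0 on ]A, s0], so the constraint 2 u'^2 = 1 + E u^2 keeps u' away from 0 there; u is then
   monotone and the sign condition gives |u| <= |u(s0)|, after which a Gronwall estimate for
   E' = -2 delta(u^2) (1 + E u^2) bounds E. Once E is bounded above, the constraint and a Gronwall
   estimate for 1 + u^2 bound u and u', and E is bounded below by E(0). But the hypothesis on
   sqrt r delta'(r) makes u |-> delta(u^2) locally Lipschitz, so the vector field is Lipschitz on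
   bounded sets, and a bounded solution on ]A, 0] with A finite has limits at A and can be
   continued past A by Picard-Lindeloef, contradicting maximality. *)

section \<open>One-variable calculus\<close>

lemma vector_derivative_bound_imp_lipschitz_on:
  fixes f :: "real \<Rightarrow> 'a::real_normed_vector"
  assumes "convex S"
    and f': "\<And>t. t \<in> S \<Longrightarrow> (f has_vector_derivative f' t) (at t within S)"
    and bound: "\<And>t. t \<in> S \<Longrightarrow> norm (f' t) \<le> B" and "0 \<le> B"
  shows "B-lipschitz_on S f"
proof (rule bounded_derivative_imp_lipschitz[OF _ \<open>convex S\<close> _ \<open>0 \<le> B\<close>])
  show "(f has_derivative (\<lambda>h. h *\<^sub>R f' t)) (at t within S)" if "t \<in> S" for t
    using f'[OF that] by (simp add: has_vector_derivative_def)
  show "onorm (\<lambda>h. h *\<^sub>R f' t) \<le> B" if "t \<in> S" for t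
    using bound[OF that] by (simp add: onorm_scaleR_left[OF bounded_linear_ident] onorm_id)
qed

lemma lipschitz_on_greaterThanAtMost_convergent_at_right:
  fixes f :: "real \<Rightarrow> 'a::complete_space"
  assumes "L-lipschitz_on {a<..b} f" and "a < b"
  obtains l where "(f \<longlongrightarrow> l) (at_right a)"
proof -
  have "uniformly_continuous_on {a<..b} f"
    using assms(1) by (rule lipschitz_on_uniformly_continuous)
  moreover have "a \<in> closure {a<..b}"
    using \<open>a < b\<close> by simp
  ultimately obtain l where "(f \<longlongrightarrow> l) (at a within {a<..b})"
    by (rule uniformly_continuous_on_extension_at_closure)
  moreover have "at a within {a<..b} = at_right a"
    by (rule at_within_nhd[of _ "{..<b}"]) (use \<open>a < b\<close> in auto)
  ultimately show ?thesis
    using that by simp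
qed

lemma continuous_on_fun_upd_left_endpoint:
  fixes f :: "real \<Rightarrow> 'a::topological_space"
  assumes cont: "continuous_on {a<..b} f" and lim: "(f \<longlongrightarrow> l) (at_right a)" and "a < b"
  shows "continuous_on {a..b} (f(a := l))"
proof (rule continuous_on_IccI)
  let ?g = "f(a := l)"
  have near: "eventually (\<lambda>x. f x = ?g x) (at z within A)" for z A
    using eventually_neq_at_within[of a z A] by eventually_elim simp
  show "(?g \<longlongrightarrow> ?g a) (at_right a)"
    using Lim_transform_eventually[OF lim near] by (simp only: fun_upd_same)
  have "(f \<longlongrightarrow> f b) (at b within {a<..b})"
    using cont \<open>a < b\<close> by (simp add: continuous_on_def)
  moreover have "at b within {a<..b} = at_left b"
    by (rule at_within_nhd[of _ "{a<..}"]) (use \<open>a < b\<close> in auto)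
  ultimately have "(f \<longlongrightarrow> f b) (at_left b)"
    by simp
  then have "(?g \<longlongrightarrow> f b) (at_left b)"
    by (rule Lim_transform_eventually[OF _ near])
  then show "(?g \<longlongrightarrow> ?g b) (at_left b)"
    using \<open>a < b\<close> by simp
  show "(?g \<longlongrightarrow> ?g x) (at x)" if "a < x" "x < b" for x
  proof -
    have "(f \<longlongrightarrow> f x) (at x within {a<..b})"
      using cont that by (simp add: continuous_on_def)
    moreover have "at x within {a<..b} = at x"
      by (rule at_within_open_subset[of _ "{a<..<b}"]) (use that in auto)
    ultimately have "(f \<longlongrightarrow> f x) (at x)"
      by simp
    then have "(?g \<longlongrightarrow> f x) (at x)"
      by (rule Lim_transform_eventually[OF _ near])
    then show ?thesis
      using that by simp
  qed
qed fact

lemma continuous_on_greaterThanAtMost_bounded: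
  fixes f :: "real \<Rightarrow> 'a::metric_space"
  assumes "continuous_on {a<..b} f" and "(f \<longlongrightarrow> l) (at_right a)"
  shows "bounded (f ` {a<..b})"
proof (cases "a < b")
  case True
  then have "bounded (f(a := l) ` {a..b})"
    using continuous_on_fun_upd_left_endpoint[OF assms]
    by (intro compact_imp_bounded compact_continuous_image) auto
  moreover have "f ` {a<..b} \<subseteq> f(a := l) ` {a..b}"
    by (auto intro!: image_eqI)
  ultimately show ?thesis
    by (rule bounded_subset)
qed simp

lemma deriv_nonneg_imp_mono_on_greaterThanAtMost:
  fixes f :: "real \<Rightarrow> real"
  assumes f': "\<And>t. t \<in> {a<..b} \<Longrightarrow> (f has_real_derivative f' t) (at t within {a<..b})"
    and nonneg: "\<And>t. t \<in> {a<..b} \<Longrightarrow> 0 \<le> f' t"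
  shows "mono_on {a<..b} f"
proof (rule mono_onI)
  fix s t assume s: "s \<in> {a<..b}" and t: "t \<in> {a<..b}" and "s \<le> t"
  have "continuous_on {a<..b} f"
    unfolding continuous_on_eq_continuous_within using f' by (blast intro: DERIV_continuous)
  then have "continuous_on {s..t} f"
    by (rule continuous_on_subset) (use s t in auto)
  moreover have "\<exists>y. DERIV f x :> y \<and> 0 \<le> y" if "s < x" "x < t" for x
  proof (intro exI conjI)
    have "x \<in> {a<..b}"
      using that s t by auto
    moreover have "at x within {a<..b} = at x"
      by (rule at_within_open_subset[of _ "{a<..<b}"]) (use that s t in auto)
    ultimately show "DERIV f x :> f' x" "0 \<le> f' x"
      using f' nonneg by metis+
  qed
  ultimately show "f s \<le> f t"
    using DERIV_nonneg_imp_increasing_open[OF \<open>s \<le> t\<close>] by blast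
qed

lemma gronwall_backward:
  fixes g :: "real \<Rightarrow> real"
  assumes g': "\<And>t. t \<in> {a<..b} \<Longrightarrow> (g has_real_derivative g' t) (at t within {a<..b})"
    and ineq: "\<And>t. t \<in> {a<..b} \<Longrightarrow> - C * g t \<le> g' t"
    and t: "t \<in> {a<..b}"
  shows "g t \<le> g b * exp (C * (b - t))"
proof -
  have "mono_on {a<..b} (\<lambda>s. g s * exp (C * s))"
  proof (rule deriv_nonneg_imp_mono_on_greaterThanAtMost)
    show "((\<lambda>s. g s * exp (C * s)) has_real_derivative (g' s + C * g s) * exp (C * s))
        (at s within {a<..b})" if "s \<in> {a<..b}" for s
      using g'[OF that] by (auto intro!: derivative_eq_intros simp: algebra_simps)
    show "0 \<le> (g' s + C * g s) * exp (C * s)" if "s \<in> {a<..b}" for s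
      using ineq[OF that] by simp
  qed
  then have "g t * exp (C * t) \<le> g b * exp (C * b)"
    using t by (auto intro: mono_onD)
  also have "exp (C * b) = exp (C * (b - t)) * exp (C * t)"
    by (simp add: right_diff_distrib flip: exp_add)
  finally show ?thesis
    by (simp add: mult.assoc)
qed

lemma lipschitz_on_greaterThanLessThan_tendsto_le:
  fixes h :: "real \<Rightarrow> 'a::real_normed_vector"
  assumes lip: "e-lipschitz_on {a<..<c} h" and lim: "(h \<longlongrightarrow> ha) (at_right a)"
    and "a < y" and "y < c"
  shows "norm (h y - ha) \<le> e * norm (y - a)"
proof (rule tendsto_le[OF trivial_limit_at_right_real])
  show "((\<lambda>x. norm (h y - h x)) \<longlongrightarrow> norm (h y - ha)) (at_right a)"
    by (intro tendsto_norm tendsto_diff tendsto_const lim)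
  show "((\<lambda>x. e * norm (y - x)) \<longlongrightarrow> e * norm (y - a)) (at_right a)"
    by (intro tendsto_intros)
  show "eventually (\<lambda>x. norm (h y - h x) \<le> e * norm (y - x)) (at_right a)"
    unfolding eventually_at_right_field
  proof (intro exI[of _ y] conjI allI impI)
    fix x assume "a < x" "x < y"
    then have "dist (h y) (h x) \<le> e * dist y x"
      using \<open>y < c\<close> by (intro lipschitz_onD[OF lip]) auto
    then show "norm (h y - h x) \<le> e * norm (y - x)"
      by (simp only: dist_norm)
  qed (fact \<open>a < y\<close>)
qed

lemma remainder_at_left_endpoint_le:
  fixes f :: "real \<Rightarrow> 'a::real_normed_vector"
  assumes f': "\<And>t. t \<in> {a<..b} \<Longrightarrow> (f has_vector_derivative f' t) (at t within {a<..b})"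
    and lim_f: "(f \<longlongrightarrow> fa) (at_right a)" and lim_f': "(f' \<longlongrightarrow> l) (at_right a)"
    and "a < b" and "0 < e"
  shows "eventually (\<lambda>y. norm (f y - fa - (y - a) *\<^sub>R l) \<le> e * norm (y - a)) (at_right a)"
proof -
  let ?h = "\<lambda>s. f s - s *\<^sub>R l"
  have "eventually (\<lambda>t. dist (f' t) l < e) (at_right a)"
    using lim_f' \<open>0 < e\<close> by (rule tendstoD)
  then obtain d where "a < d" and d: "\<And>t. a < t \<Longrightarrow> t < d \<Longrightarrow> norm (f' t - l) < e"
    unfolding eventually_at_right_field dist_norm by auto
  define c where "c = min d b"
  have "a < c" "c \<le> b"
    using \<open>a < d\<close> \<open>a < b\<close> by (auto simp: c_def)
  have "e-lipschitz_on {a<..<c} ?h"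
  proof (rule vector_derivative_bound_imp_lipschitz_on)
    show "(?h has_vector_derivative f' t - l) (at t within {a<..<c})" if "t \<in> {a<..<c}" for t
    proof -
      have "(f has_vector_derivative f' t) (at t within {a<..<c})"
        by (rule has_vector_derivative_within_subset[OF f']) (use that \<open>c \<le> b\<close> in auto)
      then show ?thesis
        by (auto intro!: derivative_eq_intros)
    qed
    show "norm (f' t - l) \<le> e" if "t \<in> {a<..<c}" for t
      using d[of t] that by (auto simp: c_def)
  qed (use \<open>0 < e\<close> in auto)
  moreover have "(?h \<longlongrightarrow> fa - a *\<^sub>R l) (at_right a)"
    by (intro tendsto_diff tendsto_scaleR lim_f tendsto_ident_at tendsto_const)
  moreover have eq: "f y - fa - (y - a) *\<^sub>R l = ?h y - (fa - a *\<^sub>R l)" for y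
    by (simp add: scaleR_left_diff_distrib)
  ultimately show ?thesis
    unfolding eventually_at_right_field eq
    using \<open>a < c\<close> lipschitz_on_greaterThanLessThan_tendsto_le by blast
qed

lemma has_vector_derivative_at_left_endpoint:
  fixes f :: "real \<Rightarrow> 'a::real_normed_vector"
  assumes f': "\<And>t. t \<in> {a<..b} \<Longrightarrow> (f has_vector_derivative f' t) (at t within {a<..b})"
    and lim_f: "(f \<longlongrightarrow> fa) (at_right a)" and lim_f': "(f' \<longlongrightarrow> l) (at_right a)"
    and "a < b"
  shows "(f(a := fa) has_vector_derivative l) (at a within {a..b})"
proof -
  have "((\<lambda>y. norm (f y - fa - (y - a) *\<^sub>R l) / norm (y - a)) \<longlongrightarrow> 0) (at_right a)"
  proof (rule tendstoI)
    fix e :: real assume "0 < e"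
    have "eventually (\<lambda>y. norm (f y - fa - (y - a) *\<^sub>R l) \<le> e / 2 * norm (y - a)) (at_right a)"
      using \<open>0 < e\<close> by (intro remainder_at_left_endpoint_le[OF f' lim_f lim_f' \<open>a < b\<close>] half_gt_zero)
    with eventually_at_right_less[of a]
    show "eventually (\<lambda>y. dist (norm (f y - fa - (y - a) *\<^sub>R l) / norm (y - a)) 0 < e) (at_right a)"
    proof eventually_elim
      case (elim y)
      then have "norm (f y - fa - (y - a) *\<^sub>R l) / norm (y - a) \<le> e / 2"
        by (simp only: pos_divide_le_eq mult.commute zero_less_norm_iff right_minus_eq)
      then have "norm (f y - fa - (y - a) *\<^sub>R l) / norm (y - a) < e"
        using \<open>0 < e\<close> by linarith
      then show ?case
        by simp
    qed
  qed
  moreover have "eventually (\<lambda>y. norm (f y - fa - (y - a) *\<^sub>R l) / norm (y - a) =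
      norm ((f(a := fa)) y - (f(a := fa)) a - (y - a) *\<^sub>R l) / norm (y - a)) (at_right a)"
    by (simp add: eventually_at_filter)
  ultimately have lim: "((\<lambda>y. norm ((f(a := fa)) y - (f(a := fa)) a - (y - a) *\<^sub>R l) / norm (y - a))
      \<longlongrightarrow> 0) (at_right a)"
    by (rule Lim_transform_eventually)
  have "(f(a := fa) has_derivative (\<lambda>h. h *\<^sub>R l)) (at a within {a..b})"
    by (rule has_derivative_iff_norm[THEN iffD2, OF conjI[OF bounded_linear_scaleR_left]])
      (simp only: at_within_Icc_at_right[OF \<open>a < b\<close>] lim)
  then show ?thesis
    by (simp only: has_vector_derivative_def)
qed

lemma has_vector_derivative_extend_left_endpoint:
  fixes f :: "real \<Rightarrow> 'a::real_normed_vector"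
  assumes f': "\<And>t. t \<in> {a<..b} \<Longrightarrow> (f has_vector_derivative f' t) (at t within {a<..b})"
    and lim_f: "(f \<longlongrightarrow> fa) (at_right a)" and lim_f': "(f' \<longlongrightarrow> l) (at_right a)"
    and "a < b" and t: "t \<in> {a..b}"
  shows "(f(a := fa) has_vector_derivative (f'(a := l)) t) (at t within {a..b})"
proof (cases "t = a")
  case True
  then show ?thesis
    using has_vector_derivative_at_left_endpoint[OF f' lim_f lim_f' \<open>a < b\<close>] by simp
next
  case False
  with t have t': "t \<in> {a<..b}"
    by auto
  have "(f(a := fa) has_vector_derivative f' t) (at t within {a<..b})"
    by (rule has_vector_derivative_transform[OF t' _ f'[OF t']]) auto
  moreover have "at t within {a..b} = at t within {a<..b}"
    by (rule at_within_nhd[of _ "{a<..}"]) (use t' in auto)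
  ultimately show ?thesis
    using False by simp
qed

lemma has_vector_derivative_Pair_iff:
  "((\<lambda>t. (f t, g t)) has_vector_derivative (f', g')) (at x within S) \<longleftrightarrow>
    (f has_vector_derivative f') (at x within S) \<and> (g has_vector_derivative g') (at x within S)"
proof
  assume fg: "((\<lambda>t. (f t, g t)) has_vector_derivative (f', g')) (at x within S)"
  show "(f has_vector_derivative f') (at x within S) \<and> (g has_vector_derivative g') (at x within S)"
    using bounded_linear.has_vector_derivative[OF bounded_linear_fst fg]
      bounded_linear.has_vector_derivative[OF bounded_linear_snd fg] by simp
qed (simp add: has_vector_derivative_Pair)

lemma continuous_on_nonzero_same_sign:
  fixes f :: "'a::topological_space \<Rightarrow> real"
  assumes "continuous_on S f" and "connected S" and nonzero: "\<And>x. x \<in> S \<Longrightarrow> f x \<noteq> 0"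
    and "s \<in> S" and "t \<in> S"
  shows "0 < f s * f t"
proof (rule ccontr)
  assume "\<not> 0 < f s * f t"
  then have "0 \<in> {min (f s) (f t)..max (f s) (f t)}"
    by (auto simp: not_less mult_le_0_iff)
  moreover have "{min (f s) (f t)..max (f s) (f t)} \<subseteq> f ` S"
    using assms by (intro connected_contains_Icc connected_continuous_image) (auto simp: min_def max_def)
  ultimately show False
    using nonzero by auto
qed

lemma bounded_if_power2_le:
  fixes S :: "real set"
  assumes "\<And>x. x \<in> S \<Longrightarrow> x\<^sup>2 \<le> c"
  shows "bounded S"
proof -
  have "\<bar>x\<bar> \<le> sqrt c" if "x \<in> S" for x
    using real_sqrt_le_mono[OF assms[OF that]] by simp
  then show ?thesis
    unfolding bounded_real by blast
qed

section \<open>Lipschitz continuity on bounded sets\<close>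

lemma lipschitz_on_cball_norm_le:
  assumes "L-lipschitz_on (cball c R) f" and "p \<in> cball c R"
  shows "norm (f p) \<le> norm (f c) + L * R"
proof -
  have "c \<in> cball c R"
    using assms(2) by (auto intro: order.trans[OF zero_le_dist])
  then have "dist (f p) (f c) \<le> L * dist p c"
    using assms by (intro lipschitz_onD) auto
  also have "\<dots> \<le> L * R"
    using assms by (intro mult_left_mono) (auto simp: dist_commute lipschitz_on_nonneg)
  finally show ?thesis
    using norm_triangle_ineq2[of "f p" "f c"] by (simp add: dist_norm)
qed

lemma lipschitz_on_bounded_image:
  assumes "L-lipschitz_on S f" and "bounded S"
  shows "bounded (f ` S)"
proof (cases "S = {}")
  case False
  then obtain x0 where "x0 \<in> S"
    by auto
  obtain e where e: "\<And>x. x \<in> S \<Longrightarrow> dist x0 x \<le> e"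
    using \<open>bounded S\<close> unfolding bounded_any_center[of _ x0] by blast
  have "dist (f x0) (f x) \<le> L * e" if "x \<in> S" for x
  proof -
    have "dist (f x0) (f x) \<le> L * dist x0 x"
      using assms(1) \<open>x0 \<in> S\<close> that by (rule lipschitz_onD)
    also have "\<dots> \<le> L * e"
      using e[OF that] lipschitz_on_nonneg[OF assms(1)] by (rule mult_left_mono)
    finally show ?thesis .
  qed
  then show ?thesis
    unfolding bounded_any_center[of _ "f x0"] by blast
qed simp

lemma lipschitz_on_abs: "1-lipschitz_on S (abs :: real \<Rightarrow> real)"
  by (rule lipschitz_onI) (auto simp: dist_real_def abs_triangle_ineq3)

definition lipschitz_on_bounded_sets :: "('a::metric_space \<Rightarrow> 'b::metric_space) \<Rightarrow> bool" where
  "lipschitz_on_bounded_sets f \<longleftrightarrow> (\<forall>S. bounded S \<longrightarrow> (\<exists>L. L-lipschitz_on S f))"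

lemma lipschitz_on_bounded_setsD:
  "lipschitz_on_bounded_sets f \<Longrightarrow> bounded S \<Longrightarrow> \<exists>L. L-lipschitz_on S f"
  unfolding lipschitz_on_bounded_sets_def by blast

lemma lipschitz_on_bounded_sets_const: "lipschitz_on_bounded_sets (\<lambda>x. c)"
  unfolding lipschitz_on_bounded_sets_def by (blast intro: lipschitz_on_constant)

lemma lipschitz_on_bounded_sets_linear:
  assumes "bounded_linear f"
  shows "lipschitz_on_bounded_sets f"
  unfolding lipschitz_on_bounded_sets_def
proof (intro allI impI)
  fix S :: "'a set"
  obtain B where "B-lipschitz_on S f"
    using assms by (rule bounded_linear.lipschitz_boundE)
  then show "\<exists>L. L-lipschitz_on S f" ..
qed

lemma lipschitz_on_bounded_sets_compose:
  fixes f :: "'a::metric_space \<Rightarrow> 'b::metric_space"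
  assumes f: "lipschitz_on_bounded_sets f" and g: "lipschitz_on_bounded_sets g"
  shows "lipschitz_on_bounded_sets (\<lambda>x. g (f x))"
  unfolding lipschitz_on_bounded_sets_def
proof (intro allI impI)
  fix S :: "'a set" assume "bounded S"
  obtain L where L: "L-lipschitz_on S f"
    using lipschitz_on_bounded_setsD[OF f \<open>bounded S\<close>] ..
  obtain M where "M-lipschitz_on (f ` S) g"
    using lipschitz_on_bounded_setsD[OF g lipschitz_on_bounded_image[OF L \<open>bounded S\<close>]] ..
  with L show "\<exists>L. L-lipschitz_on S (\<lambda>x. g (f x))"
    by (blast intro: lipschitz_on_compose2)
qed

lemma lipschitz_on_bounded_sets_diff:
  fixes f g :: "'a::metric_space \<Rightarrow> 'b::real_normed_vector"
  assumes "lipschitz_on_bounded_sets f" and "lipschitz_on_bounded_sets g"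
  shows "lipschitz_on_bounded_sets (\<lambda>x. f x - g x)"
  using assms unfolding lipschitz_on_bounded_sets_def by (blast intro: lipschitz_on_diff)

lemma lipschitz_on_bounded_sets_Pair:
  assumes "lipschitz_on_bounded_sets f" and "lipschitz_on_bounded_sets g"
  shows "lipschitz_on_bounded_sets (\<lambda>x. (f x, g x))"
  using assms unfolding lipschitz_on_bounded_sets_def by (blast intro: lipschitz_on_Pair)

lemma lipschitz_on_bounded_sets_mult:
  fixes f g :: "'a::metric_space \<Rightarrow> 'b::real_normed_algebra"
  assumes f: "lipschitz_on_bounded_sets f" and g: "lipschitz_on_bounded_sets g"
  shows "lipschitz_on_bounded_sets (\<lambda>x. f x * g x)"
  unfolding lipschitz_on_bounded_sets_def
proof (intro allI impI)
  fix S :: "'a set" assume "bounded S"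
  obtain Lf Lg where Lf: "Lf-lipschitz_on S f" and Lg: "Lg-lipschitz_on S g"
    using lipschitz_on_bounded_setsD[OF f \<open>bounded S\<close>] lipschitz_on_bounded_setsD[OF g \<open>bounded S\<close>]
    by blast
  obtain Bf Bg where "0 < Bf" "0 < Bg"
    and Bf: "\<And>x. x \<in> S \<Longrightarrow> norm (f x) \<le> Bf" and Bg: "\<And>x. x \<in> S \<Longrightarrow> norm (g x) \<le> Bg"
    using lipschitz_on_bounded_image[OF Lf \<open>bounded S\<close>] lipschitz_on_bounded_image[OF Lg \<open>bounded S\<close>]
    unfolding bounded_pos by (meson imageI)
  have "(Bf * Lg + Lf * Bg)-lipschitz_on S (\<lambda>x. f x * g x)"
  proof (rule lipschitz_onI)
    fix x y assume "x \<in> S" "y \<in> S"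
    have "f x * g x - f y * g y = f x * (g x - g y) + (f x - f y) * g y"
      by (simp add: algebra_simps)
    then have "dist (f x * g x) (f y * g y) \<le> norm (f x * (g x - g y)) + norm ((f x - f y) * g y)"
      unfolding dist_norm by (simp only: norm_triangle_ineq)
    also have "\<dots> \<le> norm (f x) * norm (g x - g y) + norm (f x - f y) * norm (g y)"
      by (intro add_mono norm_mult_ineq)
    also have "\<dots> \<le> Bf * (Lg * dist x y) + (Lf * dist x y) * Bg"
      using Bf Bg lipschitz_onD[OF Lf] lipschitz_onD[OF Lg] \<open>x \<in> S\<close> \<open>y \<in> S\<close> \<open>0 < Bf\<close>
        lipschitz_on_nonneg[OF Lf]
      by (intro add_mono mult_mono) (auto simp: dist_norm)
    finally show "dist (f x * g x) (f y * g y) \<le> (Bf * Lg + Lf * Bg) * dist x y"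
      by (simp add: algebra_simps)
  next
    show "0 \<le> Bf * Lg + Lf * Bg"
      using \<open>0 < Bf\<close> \<open>0 < Bg\<close> lipschitz_on_nonneg[OF Lf] lipschitz_on_nonneg[OF Lg] by simp
  qed
  then show "\<exists>L. L-lipschitz_on S (\<lambda>x. f x * g x)" ..
qed

section \<open>Local existence of solutions\<close>

locale picard_iteration =
  fixes G :: "'a::banach \<Rightarrow> 'a" and y0 :: 'a and R L M h :: real
  assumes lipschitz: "L-lipschitz_on (cball y0 R) G"
    and bound: "\<And>p. p \<in> cball y0 R \<Longrightarrow> norm (G p) \<le> M"
    and R_nonneg: "0 \<le> R" and h_pos: "0 < h" and h_M: "h * M \<le> R" and h_L: "h * L \<le> 1 / 2"
begin

definition clamp :: "real \<Rightarrow> real" where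
  "clamp t = max 0 (min h t)"

definition trajectories :: "(real \<Rightarrow>\<^sub>C 'a) set" where
  "trajectories = PiC UNIV (\<lambda>_. cball y0 R)"

text \<open>Trajectories are bounded continuous functions on the whole real line; clamping the upper
  limit of integration to \<open>[0, h]\<close> makes the Picard map act on them.\<close>

definition picard_map :: "(real \<Rightarrow>\<^sub>C 'a) \<Rightarrow> real \<Rightarrow> 'a" where
  "picard_map x t = y0 + integral {0..clamp t} (\<lambda>\<tau>. G (apply_bcontfun x \<tau>))"

lemma clamp_mem: "clamp t \<in> {0..h}"
  using h_pos by (auto simp: clamp_def)

lemma clamp_eq: "t \<in> {0..h} \<Longrightarrow> clamp t = t"
  by (auto simp: clamp_def)

lemma continuous_on_clamp: "continuous_on S clamp"
  unfolding clamp_def by (intro continuous_intros)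

lemma M_nonneg: "0 \<le> M"
  using bound[of y0] R_nonneg by (auto intro: order.trans[OF norm_ge_zero])

lemma mem_trajectories: "x \<in> trajectories \<longleftrightarrow> (\<forall>t. apply_bcontfun x t \<in> cball y0 R)"
  unfolding trajectories_def mem_PiC_iff by auto

lemma continuous_on_G_trajectory:
  assumes "x \<in> trajectories"
  shows "continuous_on S (\<lambda>\<tau>. G (apply_bcontfun x \<tau>))"
  by (rule continuous_on_compose2[OF lipschitz_on_continuous_on[OF lipschitz]
        continuous_on_apply_bcontfun])
    (use assms in \<open>auto simp: mem_trajectories\<close>)

lemma norm_picard_map_minus_le:
  assumes "x \<in> trajectories"
  shows "norm (picard_map x t - y0) \<le> R"
proof -
  have "norm (integral {0..clamp t} (\<lambda>\<tau>. G (apply_bcontfun x \<tau>))) \<le> M * (clamp t - 0)"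
    using clamp_mem[of t] assms
    by (intro integral_bound continuous_on_G_trajectory bound) (auto simp: mem_trajectories)
  also have "\<dots> \<le> M * h"
    using clamp_mem[of t] M_nonneg by (intro mult_left_mono) auto
  finally show ?thesis
    using h_M by (simp add: picard_map_def mult.commute)
qed

lemma picard_map_bcontfun:
  assumes "x \<in> trajectories"
  shows "picard_map x \<in> bcontfun"
proof (rule bcontfun_normI)
  have "continuous_on {0..h} (\<lambda>s. integral {0..s} (\<lambda>\<tau>. G (apply_bcontfun x \<tau>)))"
    by (intro indefinite_integral_continuous_1 integrable_continuous_interval
        continuous_on_G_trajectory assms)
  then have "continuous_on UNIV (\<lambda>t. integral {0..clamp t} (\<lambda>\<tau>. G (apply_bcontfun x \<tau>)))"
    by (rule continuous_on_compose2[OF _ continuous_on_clamp]) (use clamp_mem in auto)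
  then show "continuous_on UNIV (picard_map x)"
    unfolding picard_map_def by (intro continuous_intros)
  show "norm (picard_map x t) \<le> norm y0 + R" for t
    using norm_picard_map_minus_le[OF assms, of t] norm_triangle_ineq2[of "picard_map x t" y0]
    by linarith
qed

lemma apply_Bcontfun_picard_map:
  "x \<in> trajectories \<Longrightarrow> apply_bcontfun (Bcontfun (picard_map x)) = picard_map x"
  using picard_map_bcontfun by (simp add: Bcontfun_inverse)

lemma picard_map_contraction:
  assumes x: "x \<in> trajectories" and y: "y \<in> trajectories"
  shows "dist (Bcontfun (picard_map x)) (Bcontfun (picard_map y)) \<le> 1 / 2 * dist x y"
proof (rule dist_bound)
  fix t
  let ?d = "\<lambda>\<tau>. G (apply_bcontfun x \<tau>) - G (apply_bcontfun y \<tau>)"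
  have "picard_map x t - picard_map y t = integral {0..clamp t} ?d"
    unfolding picard_map_def
    by (subst integral_diff)
      (auto intro!: integrable_continuous_interval continuous_on_G_trajectory x y)
  moreover have "norm (integral {0..clamp t} ?d) \<le> (L * dist x y) * (clamp t - 0)"
  proof (rule integral_bound)
    show "norm (?d \<tau>) \<le> L * dist x y" for \<tau>
    proof -
      have "norm (?d \<tau>) \<le> L * dist (apply_bcontfun x \<tau>) (apply_bcontfun y \<tau>)"
        using lipschitz_onD[OF lipschitz] x y by (simp add: mem_trajectories dist_norm)
      also have "\<dots> \<le> L * dist x y"
        by (intro mult_left_mono dist_bounded lipschitz_on_nonneg[OF lipschitz])
      finally show ?thesis .
    qed
  qed (use clamp_mem[of t] in \<open>auto intro!: continuous_intros continuous_on_G_trajectory x y\<close>)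
  moreover have "(L * dist x y) * (clamp t - 0) \<le> (L * dist x y) * h"
    using clamp_mem[of t] lipschitz_on_nonneg[OF lipschitz] by (intro mult_left_mono) auto
  moreover have "(L * dist x y) * h \<le> 1 / 2 * dist x y"
    using mult_right_mono[OF h_L zero_le_dist[of x y]] by (simp add: algebra_simps)
  ultimately show "dist (Bcontfun (picard_map x) t) (Bcontfun (picard_map y) t) \<le> 1 / 2 * dist x y"
    using x y by (simp add: apply_Bcontfun_picard_map dist_norm)
qed

lemma picard_fixed_point: "\<exists>!x\<in>trajectories. Bcontfun (picard_map x) = x"
proof (rule Banach_fix[where c = "1 / 2"])
  show "complete trajectories"
    unfolding trajectories_def complete_eq_closed by (rule closed_PiC) auto
  have "const_bcontfun y0 \<in> trajectories"
    using R_nonneg by (simp add: mem_trajectories const_bcontfun.rep_eq)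
  then show "trajectories \<noteq> {}"
    by auto
  show "(\<lambda>x. Bcontfun (picard_map x)) ` trajectories \<subseteq> trajectories"
    using norm_picard_map_minus_le
    by (auto simp: mem_trajectories apply_Bcontfun_picard_map dist_norm norm_minus_commute)
  show "dist (Bcontfun (picard_map x)) (Bcontfun (picard_map y)) \<le> 1 / 2 * dist x y"
    if "x \<in> trajectories" "y \<in> trajectories" for x y
    using that by (rule picard_map_contraction)
qed simp_all

lemma picard_solution:
  obtains z where "z 0 = y0"
    "\<And>t. t \<in> {0..h} \<Longrightarrow> (z has_vector_derivative G (z t)) (at t within {0..h})"
proof -
  obtain x where x: "x \<in> trajectories" and fixed: "Bcontfun (picard_map x) = x"
    using picard_fixed_point by auto
  define z where "z = apply_bcontfun x"
  have z_eq: "z t = y0 + integral {0..t} (\<lambda>\<tau>. G (z \<tau>))" if "t \<in> {0..h}" for t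
    using apply_Bcontfun_picard_map[OF x] fixed clamp_eq[OF that]
    unfolding z_def picard_map_def by metis
  show ?thesis
  proof
    show "z 0 = y0"
      using z_eq[of 0] h_pos by simp
    fix t assume t: "t \<in> {0..h}"
    have "((\<lambda>s. y0 + integral {0..s} (\<lambda>\<tau>. G (z \<tau>))) has_vector_derivative G (z t)) (at t within {0..h})"
      using continuous_on_G_trajectory[OF x] t unfolding z_def
      by (auto intro!: derivative_eq_intros integral_has_vector_derivative)
    then show "(z has_vector_derivative G (z t)) (at t within {0..h})"
      by (rule has_vector_derivative_transform[OF t z_eq, rotated])
  qed
qed

end

lemma picard_local_existence:
  fixes G :: "'a::banach \<Rightarrow> 'a"
  assumes "0 < R" and lip: "L-lipschitz_on (cball y0 R) G"
  obtains h z where "0 < h" "z 0 = y0"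
    "\<And>t. t \<in> {0..h} \<Longrightarrow> (z has_vector_derivative G (z t)) (at t within {0..h})"
proof -
  define M where "M = norm (G y0) + L * R"
  define h where "h = min (R / (M + 1)) (1 / (2 * (L + 1)))"
  have "0 \<le> L"
    using lip by (rule lipschitz_on_nonneg)
  then have "0 \<le> M"
    using \<open>0 < R\<close> by (simp add: M_def)
  have "0 < h"
    using \<open>0 < R\<close> \<open>0 \<le> L\<close> \<open>0 \<le> M\<close> by (simp add: h_def)
  have "h * M \<le> R / (M + 1) * M"
    using \<open>0 \<le> M\<close> by (intro mult_right_mono) (auto simp: h_def)
  also have "\<dots> \<le> R"
    using \<open>0 < R\<close> \<open>0 \<le> M\<close> by (simp add: field_simps)
  finally have "h * M \<le> R" .
  have "h * L \<le> 1 / (2 * (L + 1)) * L"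
    using \<open>0 \<le> L\<close> by (intro mult_right_mono) (auto simp: h_def)
  also have "\<dots> \<le> 1 / 2"
    using \<open>0 \<le> L\<close> by (simp add: field_simps)
  finally have "h * L \<le> 1 / 2" .
  have bound: "norm (G p) \<le> M" if "p \<in> cball y0 R" for p
    using lipschitz_on_cball_norm_le[OF lip that] by (simp add: M_def)
  interpret picard_iteration G y0 R L M h
    using lip bound \<open>0 < R\<close> \<open>0 < h\<close> \<open>h * M \<le> R\<close> \<open>h * L \<le> 1 / 2\<close>
    by unfold_locales auto
  from picard_solution \<open>0 < h\<close> that show ?thesis
    by blast
qed

lemma picard_local_existence_left:
  fixes F :: "'a::banach \<Rightarrow> 'a"
  assumes "0 < R" and "L-lipschitz_on (cball y0 R) F"
  obtains h z where "0 < h" "z a = y0"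
    "\<And>t. t \<in> {a - h..a} \<Longrightarrow> (z has_vector_derivative F (z t)) (at t within {a - h..a})"
proof -
  have "L-lipschitz_on (cball y0 R) (\<lambda>p. - F p)"
    using assms(2) by simp
  then obtain h w where "0 < h" "w 0 = y0"
    and w': "\<And>s. s \<in> {0..h} \<Longrightarrow> (w has_vector_derivative - F (w s)) (at s within {0..h})"
    using picard_local_existence[OF \<open>0 < R\<close>] by blast
  show ?thesis
  proof (rule that[of h "\<lambda>t. w (a - t)"])
    show "0 < h" "w (a - a) = y0"
      using \<open>0 < h\<close> \<open>w 0 = y0\<close> by simp_all
    fix t assume t: "t \<in> {a - h..a}"
    have "((\<lambda>t. a - t) has_vector_derivative 0 - 1) (at t within {a - h..a})"
      by (intro has_vector_derivative_diff has_vector_derivative_const has_vector_derivative_id)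
    moreover have "(w has_vector_derivative - F (w (a - t))) (at (a - t) within (\<lambda>t. a - t) ` {a - h..a})"
      by (rule has_vector_derivative_within_subset[OF w']) (use t in auto)
    ultimately have "((w \<circ> (\<lambda>t. a - t)) has_vector_derivative (0 - 1) *\<^sub>R - F (w (a - t)))
        (at t within {a - h..a})"
      by (rule vector_diff_chain_within)
    then show "((\<lambda>t. w (a - t)) has_vector_derivative F (w (a - t))) (at t within {a - h..a})"
      by (simp add: o_def)
  qed
qed

section \<open>Bounded solutions extend past the left end\<close>

lemma bounded_solution_extends_to_left_endpoint:
  fixes F :: "'a::banach \<Rightarrow> 'a" and y :: "real \<Rightarrow> 'a"
  assumes F: "lipschitz_on_bounded_sets F"
    and y': "\<And>t. t \<in> {a<..b} \<Longrightarrow> (y has_vector_derivative F (y t)) (at t within {a<..b})"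
    and "a < b" and "bounded (y ` {a<..b})"
  obtains ya where "\<And>t. t \<in> {a..b} \<Longrightarrow>
    (y(a := ya) has_vector_derivative F ((y(a := ya)) t)) (at t within {a..b})"
proof -
  obtain R where "\<And>t. t \<in> {a<..b} \<Longrightarrow> norm (y t) \<le> R"
    using \<open>bounded (y ` {a<..b})\<close> unfolding bounded_pos by (meson imageI)
  then have R: "\<And>t. t \<in> {a<..b} \<Longrightarrow> y t \<in> cball 0 R"
    by simp
  obtain L where L: "L-lipschitz_on (cball 0 R) F"
    using lipschitz_on_bounded_setsD[OF F bounded_cball] ..
  define B where "B = norm (F 0) + L * R"
  have FB: "norm (F (y t)) \<le> B" if "t \<in> {a<..b}" for t
    using lipschitz_on_cball_norm_le[OF L R[OF that]] by (simp add: B_def)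
  then have "0 \<le> B"
    using \<open>a < b\<close> by (meson greaterThanAtMost_iff norm_ge_zero order.refl order.trans)
  then have "B-lipschitz_on {a<..b} y"
    using FB y' by (intro vector_derivative_bound_imp_lipschitz_on) auto
  then obtain ya where ya: "(y \<longlongrightarrow> ya) (at_right a)"
    using \<open>a < b\<close> by (rule lipschitz_on_greaterThanAtMost_convergent_at_right)
  have eventually_R: "eventually (\<lambda>t. y t \<in> cball 0 R) (at_right a)"
    unfolding eventually_at_right_field using \<open>a < b\<close> R by (intro exI[of _ b]) auto
  then have "ya \<in> cball 0 R"
    by (intro Lim_in_closed_set[OF closed_cball _ trivial_limit_at_right_real ya])
  then have Fya: "((\<lambda>t. F (y t)) \<longlongrightarrow> F ya) (at_right a)"
    by (intro continuous_on_tendsto_compose[OF lipschitz_on_continuous_on[OF L] ya _ eventually_R])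
  show ?thesis
  proof (rule that)
    fix t assume "t \<in> {a..b}"
    have "((\<lambda>t. F (y t))(a := F ya)) t = F ((y(a := ya)) t)"
      by simp
    with has_vector_derivative_extend_left_endpoint[OF y' ya Fya \<open>a < b\<close> \<open>t \<in> {a..b}\<close>]
    show "(y(a := ya) has_vector_derivative F ((y(a := ya)) t)) (at t within {a..b})"
      by (simp only:)
  qed
qed

lemma has_vector_derivative_join_solutions:
  assumes left: "\<And>t. t \<in> {c..a} \<Longrightarrow> (w has_vector_derivative F (w t)) (at t within {c..a})"
    and right: "\<And>t. t \<in> {a..b} \<Longrightarrow> (y has_vector_derivative F (y t)) (at t within {a..b})"
    and "w a = y a" and "c < a" and "a < b" and t: "t \<in> {c..b}"
  shows "((\<lambda>t. if t \<in> {c..a} then w t else y t) has_vector_derivative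
    F (if t \<in> {c..a} then w t else y t)) (at t within {c..b})"
proof (rule has_vector_derivative_eq_rhs)
  have "closure {c..a} \<inter> closure {a<..b} = {a}"
    using \<open>c < a\<close> \<open>a < b\<close> by auto
  moreover have "{c..a} \<union> {a} = {c..a}" "{a<..b} \<union> {a} = {a..b}"
    using \<open>c < a\<close> \<open>a < b\<close> by auto
  moreover have "{c..b} = {c..a} \<union> {a<..b}"
    using \<open>c < a\<close> \<open>a < b\<close> by (intro ivl_disj_un_two(8)[symmetric]) auto
  ultimately show "((\<lambda>t. if t \<in> {c..a} then w t else y t) has_vector_derivative
      (if t \<in> {c..a} then F (w t) else F (y t))) (at t within {c..b})"
    using t \<open>w a = y a\<close> \<open>a < b\<close> left right
    by (intro has_vector_derivative_If_within_closures[where T = "{a<..b}"])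
      (simp_all only:, auto simp: closure_greaterThanAtMost)
  show "(if t \<in> {c..a} then F (w t) else F (y t)) = F (if t \<in> {c..a} then w t else y t)"
    by (rule if_distrib[symmetric])
qed

theorem bounded_solution_extends_left:
  fixes F :: "'a::banach \<Rightarrow> 'a" and y :: "real \<Rightarrow> 'a"
  assumes F: "lipschitz_on_bounded_sets F"
    and y': "\<And>t. t \<in> {a<..b} \<Longrightarrow> (y has_vector_derivative F (y t)) (at t within {a<..b})"
    and "a < b" and "bounded (y ` {a<..b})"
  obtains a' z where "a' < a"
    "\<And>t. t \<in> {a'<..b} \<Longrightarrow> (z has_vector_derivative F (z t)) (at t within {a'<..b})"
    "\<And>t. t \<in> {a<..b} \<Longrightarrow> z t = y t"
proof -
  obtain ya where right: "\<And>t. t \<in> {a..b} \<Longrightarrow>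
      (y(a := ya) has_vector_derivative F ((y(a := ya)) t)) (at t within {a..b})"
    using bounded_solution_extends_to_left_endpoint[OF assms] by blast
  obtain L where "L-lipschitz_on (cball ya 1) F"
    using lipschitz_on_bounded_setsD[OF F bounded_cball] ..
  then obtain h w where "0 < h" "w a = ya"
    and left: "\<And>t. t \<in> {a - h..a} \<Longrightarrow> (w has_vector_derivative F (w t)) (at t within {a - h..a})"
    using picard_local_existence_left[where a = a, OF zero_less_one] by blast
  let ?z = "\<lambda>t. if t \<in> {a - h..a} then w t else (y(a := ya)) t"
  show ?thesis
  proof (rule that[of "a - h" ?z])
    show "a - h < a"
      using \<open>0 < h\<close> by simp
    show "(?z has_vector_derivative F (?z t)) (at t within {a - h<..b})" if "t \<in> {a - h<..b}" for t
      using that \<open>0 < h\<close> \<open>a < b\<close> \<open>w a = ya\<close>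
      by (intro has_vector_derivative_within_subset[OF has_vector_derivative_join_solutions[OF left right]])
        auto
    show "?z t = y t" if "t \<in> {a<..b}" for t
      using that by simp
  qed
qed

section \<open>The damped system\<close>

definition ode_rhs :: "(real \<Rightarrow> real) \<Rightarrow> real \<times> real \<times> real \<Rightarrow> real \<times> real \<times> real" where
  "ode_rhs \<delta> = (\<lambda>(u, v, E). (v, E * u / 2 - dext \<delta> (u\<^sup>2) * u\<^sup>2 * v, - 4 * dext \<delta> (u\<^sup>2) * v\<^sup>2))"

lemma is_sol_iff:
  "is_sol \<delta> a u v E \<longleftrightarrow> (\<forall>s\<in>{a<..0}.
    ((\<lambda>t. (u t, v t, E t)) has_vector_derivative ode_rhs \<delta> (u s, v s, E s)) (at s within {a<..0}))"
  unfolding is_sol_def ode_rhs_def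
  by (simp add: has_vector_derivative_Pair_iff has_real_derivative_iff_has_vector_derivative)

lemma on_MD: "on_M a u v E \<Longrightarrow> s \<in> {a<..0} \<Longrightarrow> 2 * (v s)\<^sup>2 = 1 + E s * (u s)\<^sup>2"
  unfolding on_M_def by (simp add: algebra_simps)

locale damping =
  fixes \<delta> \<delta>' :: "real \<Rightarrow> real" and K :: real
  assumes nonneg: "\<forall>r>0. \<delta> r \<ge> 0"
    and bounded_by: "\<forall>r>0. \<bar>\<delta> r\<bar> \<le> K"
    and deriv: "\<forall>r>0. (\<delta> has_real_derivative \<delta>' r) (at r)"
    and cont_deriv: "continuous_on {0<..} \<delta>'"
    and lim0: "((\<lambda>r. sqrt r * \<delta>' r) \<longlongrightarrow> 0) (at_right 0)"
begin

lemma has_real_derivative_delta_sq: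
  assumes "0 < t"
  shows "((\<lambda>t. \<delta> (t\<^sup>2)) has_real_derivative \<delta>' (t\<^sup>2) * (2 * t)) (at t)"
proof (rule DERIV_chain2[where f = \<delta>])
  show "(\<delta> has_real_derivative \<delta>' (t\<^sup>2)) (at (t\<^sup>2))"
    using deriv assms by simp
  show "((\<lambda>t. t\<^sup>2) has_real_derivative 2 * t) (at t)"
    using DERIV_power[OF DERIV_ident, of 2] by simp
qed

lemma bounded_deriv_delta_sq: "bounded ((\<lambda>t. \<delta>' (t\<^sup>2) * (2 * t)) ` {0<..R})"
proof (rule continuous_on_greaterThanAtMost_bounded)
  \<comment> \<open>Here \<open>\<delta>'(t\<^sup>2) 2 t = 2 sqrt(t\<^sup>2) \<delta>'(t\<^sup>2)\<close> for \<open>t > 0\<close>, so the hypothesis on \<open>sqrt r \<delta>'(r)\<close> applies.\<close>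
  have "filterlim (\<lambda>t::real. t\<^sup>2) (at_right 0) (at_right 0)"
    by real_asymp
  from tendsto_mult_right[OF filterlim_compose[OF lim0 this], of 2]
  have "((\<lambda>t. sqrt (t\<^sup>2) * \<delta>' (t\<^sup>2) * 2) \<longlongrightarrow> 0) (at_right 0)"
    by simp
  moreover have "eventually (\<lambda>t. sqrt (t\<^sup>2) * \<delta>' (t\<^sup>2) * 2 = \<delta>' (t\<^sup>2) * (2 * t)) (at_right 0)"
    by (simp add: eventually_at_filter)
  ultimately show "((\<lambda>t. \<delta>' (t\<^sup>2) * (2 * t)) \<longlongrightarrow> 0) (at_right 0)"
    by (rule Lim_transform_eventually)
  have "continuous_on {0<..R} (\<lambda>t. \<delta>' (t\<^sup>2))"
    by (rule continuous_on_compose2[OF cont_deriv]) (auto intro!: continuous_intros)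
  then show "continuous_on {0<..R} (\<lambda>t. \<delta>' (t\<^sup>2) * (2 * t))"
    by (intro continuous_on_mult continuous_on_mult_const continuous_on_id)
qed

lemma lipschitz_on_delta_sq: obtains M where "M-lipschitz_on {0<..R} (\<lambda>t. \<delta> (t\<^sup>2))"
proof -
  obtain B where B: "\<forall>x\<in>(\<lambda>t. \<delta>' (t\<^sup>2) * (2 * t)) ` {0<..R}. \<bar>x\<bar> \<le> B"
    using bounded_deriv_delta_sq unfolding bounded_real ..
  have "(max B 0)-lipschitz_on {0<..R} (\<lambda>t. \<delta> (t\<^sup>2))"
  proof (rule vector_derivative_bound_imp_lipschitz_on)
    show "((\<lambda>t. \<delta> (t\<^sup>2)) has_vector_derivative \<delta>' (t\<^sup>2) * (2 * t)) (at t within {0<..R})"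
      if "t \<in> {0<..R}" for t
      using has_real_derivative_delta_sq[of t] that
      by (simp add: has_real_derivative_iff_has_vector_derivative[symmetric] has_field_derivative_at_within)
    show "norm (\<delta>' (t\<^sup>2) * (2 * t)) \<le> max B 0" if "t \<in> {0<..R}" for t
    proof -
      have "\<bar>\<delta>' (t\<^sup>2) * (2 * t)\<bar> \<le> B"
        using B that by blast
      then show ?thesis
        by simp
    qed
  qed auto
  then show ?thesis ..
qed

lemma delta_tendsto: "(\<delta> \<longlongrightarrow> dext \<delta> 0) (at_right 0)"
proof -
  obtain M where "M-lipschitz_on {0<..1} (\<lambda>t. \<delta> (t\<^sup>2))"
    using lipschitz_on_delta_sq .
  then obtain l where l: "((\<lambda>t. \<delta> (t\<^sup>2)) \<longlongrightarrow> l) (at_right 0)"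
    using zero_less_one by (rule lipschitz_on_greaterThanAtMost_convergent_at_right)
  have "filterlim sqrt (at_right 0) (at_right (0::real))"
    by real_asymp
  from filterlim_compose[OF l this] have "((\<lambda>r. \<delta> ((sqrt r)\<^sup>2)) \<longlongrightarrow> l) (at_right 0)" .
  moreover have "eventually (\<lambda>r. \<delta> ((sqrt r)\<^sup>2) = \<delta> r) (at_right 0)"
    by (simp add: eventually_at_filter)
  ultimately have "(\<delta> \<longlongrightarrow> l) (at_right 0)"
    by (rule Lim_transform_eventually)
  moreover from this have "dext \<delta> 0 = l"
    unfolding dext_def by (simp add: tendsto_Lim)
  ultimately show ?thesis
    by simp
qed

definition damp :: "real \<Rightarrow> real" where
  "damp u = dext \<delta> (u\<^sup>2)"

lemma damp_nonneg: "0 \<le> damp u"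
proof (cases "u = 0")
  case True
  have "0 \<le> dext \<delta> 0"
    by (rule tendsto_lowerbound[OF delta_tendsto])
      (use nonneg in \<open>auto simp: eventually_at_filter\<close>)
  with True show ?thesis
    by (simp add: damp_def)
qed (use nonneg in \<open>simp add: damp_def dext_def\<close>)

lemma damp_le: "damp u \<le> K"
proof (cases "u = 0")
  case True
  have "dext \<delta> 0 \<le> K"
    by (rule tendsto_upperbound[OF delta_tendsto])
      (use bounded_by in \<open>auto simp: eventually_at_filter abs_le_iff\<close>)
  with True show ?thesis
    by (simp add: damp_def)
qed (use bounded_by in \<open>auto simp: damp_def dext_def abs_le_iff\<close>)

lemma lipschitz_on_damp:
  assumes "0 < R"
  obtains M where "M-lipschitz_on {-R..R} damp"
proof -
  obtain M where M: "M-lipschitz_on {0<..R} (\<lambda>t. \<delta> (t\<^sup>2))"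
    using lipschitz_on_delta_sq .
  then obtain g where g: "M-lipschitz_on {0..R} g" and g_eq: "\<And>t. t \<in> {0<..R} \<Longrightarrow> g t = \<delta> (t\<^sup>2)"
    using lipschitz_extend_closure[OF M] assms by (auto simp: closure_greaterThanAtMost)
  have "(g \<longlongrightarrow> g 0) (at_right 0)"
    using lipschitz_on_continuous_on[OF g] assms
    by (auto simp: continuous_on_def at_within_Icc_at_right[symmetric])
  moreover have "(g \<longlongrightarrow> dext \<delta> 0) (at_right 0)"
  proof (rule Lim_transform_eventually)
    have "filterlim (\<lambda>t::real. t\<^sup>2) (at_right 0) (at_right 0)"
      by real_asymp
    then show "((\<lambda>t. \<delta> (t\<^sup>2)) \<longlongrightarrow> dext \<delta> 0) (at_right 0)"
      by (rule filterlim_compose[OF delta_tendsto])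
    show "eventually (\<lambda>t. \<delta> (t\<^sup>2) = g t) (at_right 0)"
      unfolding eventually_at_right_field using assms g_eq by (intro exI[of _ R]) auto
  qed
  ultimately have "g 0 = dext \<delta> 0"
    by (rule tendsto_unique[OF trivial_limit_at_right_real])
  then have damp_eq: "damp u = g \<bar>u\<bar>" if "u \<in> {-R..R}" for u
    using that g_eq[of "\<bar>u\<bar>"] by (cases "u = 0") (auto simp: damp_def dext_def)
  have "abs ` {-R..R} \<subseteq> {0..R}"
    by auto
  then have "(M * 1)-lipschitz_on {-R..R} (\<lambda>u. g \<bar>u\<bar>)"
    by (intro lipschitz_on_compose2[OF lipschitz_on_abs] lipschitz_on_subset[OF g])
  then have "(M * 1)-lipschitz_on {-R..R} damp"
    by (rule lipschitz_on_transform) (simp add: damp_eq)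
  then show ?thesis ..
qed

lemma lipschitz_on_bounded_sets_damp: "lipschitz_on_bounded_sets damp"
  unfolding lipschitz_on_bounded_sets_def
proof (intro allI impI)
  fix S :: "real set" assume "bounded S"
  then obtain R where "0 < R" "S \<subseteq> {-R..R}"
    unfolding bounded_pos by (force simp: abs_le_iff)
  obtain M where "M-lipschitz_on {-R..R} damp"
    using lipschitz_on_damp[OF \<open>0 < R\<close>] .
  then show "\<exists>L. L-lipschitz_on S damp"
    using \<open>S \<subseteq> {-R..R}\<close> by (blast intro: lipschitz_on_subset)
qed

lemma ode_rhs_eq: "ode_rhs \<delta> = (\<lambda>p. (fst (snd p),
    snd (snd p) * fst p * (1 / 2) - damp (fst p) * (fst p * fst p) * fst (snd p),
    (- 4) * damp (fst p) * (fst (snd p) * fst (snd p))))"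
  by (auto simp: ode_rhs_def damp_def power2_eq_square fun_eq_iff)

lemma lipschitz_on_bounded_sets_ode_rhs: "lipschitz_on_bounded_sets (ode_rhs \<delta>)"
proof -
  have u: "lipschitz_on_bounded_sets (\<lambda>p::real \<times> real \<times> real. fst p)"
    by (rule lipschitz_on_bounded_sets_linear[OF bounded_linear_fst])
  have v: "lipschitz_on_bounded_sets (\<lambda>p::real \<times> real \<times> real. fst (snd p))"
    by (intro lipschitz_on_bounded_sets_linear bounded_linear_compose[OF bounded_linear_fst]
        bounded_linear_snd)
  have E: "lipschitz_on_bounded_sets (\<lambda>p::real \<times> real \<times> real. snd (snd p))"
    by (intro lipschitz_on_bounded_sets_linear bounded_linear_compose[OF bounded_linear_snd]
        bounded_linear_snd)
  have d: "lipschitz_on_bounded_sets (\<lambda>p::real \<times> real \<times> real. damp (fst p))"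
    by (rule lipschitz_on_bounded_sets_compose[OF u lipschitz_on_bounded_sets_damp])
  show ?thesis
    unfolding ode_rhs_eq
    by (intro lipschitz_on_bounded_sets_Pair lipschitz_on_bounded_sets_diff lipschitz_on_bounded_sets_mult
        lipschitz_on_bounded_sets_const u v E d)
qed

lemma is_solD:
  assumes "is_sol \<delta> a u v E" and "s \<in> {a<..0}"
  shows "(u has_real_derivative v s) (at s within {a<..0})"
    and "(v has_real_derivative E s * u s / 2 - damp (u s) * (u s)\<^sup>2 * v s) (at s within {a<..0})"
    and "(E has_real_derivative - 4 * damp (u s) * (v s)\<^sup>2) (at s within {a<..0})"
  using assms unfolding is_sol_def damp_def by auto

lemma maximal_left_imp_unbounded:
  assumes "A < 0" and sol: "is_sol \<delta> A u v E" and maxl: "maximal_left \<delta> A u v E"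
  shows "\<not> bounded ((\<lambda>s. (u s, v s, E s)) ` {A<..0})"
proof
  assume bdd: "bounded ((\<lambda>s. (u s, v s, E s)) ` {A<..0})"
  have "((\<lambda>t. (u t, v t, E t)) has_vector_derivative ode_rhs \<delta> (u s, v s, E s)) (at s within {A<..0})"
    if "s \<in> {A<..0}" for s
    using sol that by (simp add: is_sol_iff)
  then obtain a' z where "a' < A"
    and z': "\<And>t. t \<in> {a'<..0} \<Longrightarrow> (z has_vector_derivative ode_rhs \<delta> (z t)) (at t within {a'<..0})"
    and z_eq: "\<And>t. t \<in> {A<..0} \<Longrightarrow> z t = (u t, v t, E t)"
    using bounded_solution_extends_left[OF lipschitz_on_bounded_sets_ode_rhs _ \<open>A < 0\<close> bdd] by blast
  have "is_sol \<delta> a' (\<lambda>t. fst (z t)) (\<lambda>t. fst (snd (z t))) (\<lambda>t. snd (snd (z t)))"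
    using z' by (simp add: is_sol_iff)
  moreover have "\<forall>s\<in>{A<..0}. fst (z s) = u s \<and> fst (snd (z s)) = v s \<and> snd (snd (z s)) = E s"
    using z_eq by simp
  ultimately show False
    using maxl \<open>a' < A\<close> unfolding maximal_left_def by blast
qed

lemma E_antimono:
  assumes sol: "is_sol \<delta> a u v E"
  shows "antimono_on {a<..0} E"
proof -
  have "mono_on {a<..0} (\<lambda>t. - E t)"
  proof (rule deriv_nonneg_imp_mono_on_greaterThanAtMost)
    show "((\<lambda>t. - E t) has_real_derivative - (- 4 * damp (u t) * (v t)\<^sup>2)) (at t within {a<..0})"
      if "t \<in> {a<..0}" for t
      using is_solD(3)[OF sol that] by (rule DERIV_minus)
    show "0 \<le> - (- 4 * damp (u t) * (v t)\<^sup>2)" for t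
      using damp_nonneg[of "u t"] by simp
  qed
  then show ?thesis
    by (auto simp: monotone_on_def)
qed

lemma u_sq_le_if_E_le:
  assumes sol: "is_sol \<delta> A u v E" and onM: "on_M A u v E" and "0 \<le> B"
    and E_le: "\<And>s. s \<in> {A<..0} \<Longrightarrow> E s \<le> B" and s: "s \<in> {A<..0}"
  shows "1 + (u s)\<^sup>2 \<le> (1 + (u 0)\<^sup>2) * exp ((1 + B) * (0 - A))"
proof -
  have "1 + (u s)\<^sup>2 \<le> (1 + (u 0)\<^sup>2) * exp ((1 + B) * (0 - s))"
  proof (rule gronwall_backward)
    show "((\<lambda>t. 1 + (u t)\<^sup>2) has_real_derivative 2 * u t * v t) (at t within {A<..0})"
      if "t \<in> {A<..0}" for t
      using is_solD(1)[OF sol that] by (auto intro!: derivative_eq_intros)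
    \<comment> \<open>\<open>-2 u v \<le> u\<^sup>2 + v\<^sup>2\<close>, and \<open>2 v\<^sup>2 = 1 + E u\<^sup>2 \<le> 1 + B u\<^sup>2\<close> on the manifold.\<close>
    show "- (1 + B) * (1 + (u t)\<^sup>2) \<le> 2 * u t * v t" if "t \<in> {A<..0}" for t
    proof -
      have "E t * (u t)\<^sup>2 \<le> B * (u t)\<^sup>2"
        using E_le[OF that] by (rule mult_right_mono) simp
      moreover have "0 \<le> (u t + v t)\<^sup>2" "0 \<le> B * (u t)\<^sup>2"
        using \<open>0 \<le> B\<close> by simp_all
      moreover have "(1 + B) * (1 + (u t)\<^sup>2) = 1 + (u t)\<^sup>2 + B + B * (u t)\<^sup>2"
        by (simp add: algebra_simps)
      ultimately show ?thesis
        using on_MD[OF onM that] \<open>0 \<le> B\<close> unfolding power2_sum by linarith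
    qed
  qed (use s in auto)
  also have "\<dots> \<le> (1 + (u 0)\<^sup>2) * exp ((1 + B) * (0 - A))"
  proof -
    have "(1 + B) * (0 - s) \<le> (1 + B) * (0 - A)"
      using s \<open>0 \<le> B\<close> by (intro mult_left_mono) auto
    then show ?thesis
      by (intro mult_left_mono) simp_all
  qed
  finally show ?thesis .
qed

lemma bounded_if_E_bdd_above:
  assumes "A < 0" and sol: "is_sol \<delta> A u v E" and onM: "on_M A u v E"
    and E_le: "\<And>s. s \<in> {A<..0} \<Longrightarrow> E s \<le> B"
  shows "bounded ((\<lambda>s. (u s, v s, E s)) ` {A<..0})"
proof -
  define B' where "B' = max B 0"
  have "0 \<le> B'" and E_le': "\<And>s. s \<in> {A<..0} \<Longrightarrow> E s \<le> B'"
    using E_le by (force simp: B'_def)+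
  define G where "G = (1 + (u 0)\<^sup>2) * exp ((1 + B') * (0 - A))"
  have u_sq: "(u s)\<^sup>2 \<le> G" if "s \<in> {A<..0}" for s
    using u_sq_le_if_E_le[OF sol onM \<open>0 \<le> B'\<close> E_le' that] by (simp add: G_def)
  have "bounded (u ` {A<..0})"
    by (rule bounded_if_power2_le[where c = G]) (use u_sq in blast)
  moreover have "bounded (v ` {A<..0})"
  proof (rule bounded_if_power2_le[where c = "(1 + B' * G) / 2"])
    fix x assume "x \<in> v ` {A<..0}"
    then obtain s where s: "s \<in> {A<..0}" and "x = v s"
      by blast
    have "E s * (u s)\<^sup>2 \<le> B' * (u s)\<^sup>2" "B' * (u s)\<^sup>2 \<le> B' * G"
      using E_le'[OF s] u_sq[OF s] \<open>0 \<le> B'\<close> by (simp_all add: mult_right_mono mult_left_mono)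
    then show "x\<^sup>2 \<le> (1 + B' * G) / 2"
      using on_MD[OF onM s] \<open>x = v s\<close> by simp
  qed
  moreover have "bounded (E ` {A<..0})"
  proof -
    have "E 0 \<le> E s" "E s \<le> B" if "s \<in> {A<..0}" for s
      using E_antimono[OF sol] E_le that \<open>A < 0\<close> by (auto simp: monotone_on_def)
    then have "\<bar>x\<bar> \<le> \<bar>E 0\<bar> + \<bar>B\<bar>" if "x \<in> E ` {A<..0}" for x
      using that by fastforce
    then show ?thesis
      unfolding bounded_real by blast
  qed
  ultimately have "bounded (u ` {A<..0} \<times> v ` {A<..0} \<times> E ` {A<..0})"
    by (intro bounded_Times)
  then show ?thesis
    by (rule bounded_subset) auto
qed

lemma v_same_sign_where_E_pos:
  assumes sol: "is_sol \<delta> A u v E" and onM: "on_M A u v E"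
    and s0: "s0 \<in> {A<..0}" and "0 < E s0" and s: "s \<in> {A<..s0}"
  shows "0 < v s0 * v s"
proof -
  have J: "{A<..s0} \<subseteq> {A<..0}"
    using s0 by auto
  have v_nonzero: "v t \<noteq> 0" if "t \<in> {A<..s0}" for t
  proof -
    have "E s0 \<le> E t"
      using E_antimono[OF sol] that s0 J by (auto simp: monotone_on_def)
    then have "0 \<le> E t * (u t)\<^sup>2"
      using \<open>0 < E s0\<close> by simp
    then show ?thesis
      using on_MD[OF onM] that J by fastforce
  qed
  have "continuous_on {A<..0} v"
    unfolding continuous_on_eq_continuous_within
    using is_solD(2)[OF sol] by (blast intro: DERIV_continuous)
  then show ?thesis
    using s0 s v_nonzero
    by (intro continuous_on_nonzero_same_sign[OF continuous_on_subset[OF _ J]]) auto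
qed

lemma mono_on_v_mult_u_where_E_pos:
  assumes sol: "is_sol \<delta> A u v E" and onM: "on_M A u v E"
    and s0: "s0 \<in> {A<..0}" and "0 < E s0"
  shows "mono_on {A<..s0} (\<lambda>s. v s0 * u s)"
proof (rule deriv_nonneg_imp_mono_on_greaterThanAtMost)
  have J: "{A<..s0} \<subseteq> {A<..0}"
    using s0 by auto
  show "((\<lambda>s. v s0 * u s) has_real_derivative v s0 * v s) (at s within {A<..s0})"
    if "s \<in> {A<..s0}" for s
    using has_field_derivative_subset[OF is_solD(1)[OF sol] J] that J
    by (auto intro!: DERIV_cmult)
  show "0 \<le> v s0 * v s" if "s \<in> {A<..s0}" for s
    using v_same_sign_where_E_pos[OF sol onM s0 \<open>0 < E s0\<close> that] by simp
qed

lemma u_sq_le_where_E_pos: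
  assumes sol: "is_sol \<delta> A u v E" and onM: "on_M A u v E"
    and s0: "s0 \<in> {A<..0}" and "0 < E s0"
    and freq: "\<And>s1. s1 \<in> {A<..0} \<Longrightarrow> \<exists>s\<in>{A<..s1}. 0 \<le> v s * u s"
    and t: "t \<in> {A<..s0}"
  shows "(u t)\<^sup>2 \<le> (u s0)\<^sup>2"
proof -
  have J: "{A<..s0} \<subseteq> {A<..0}"
    using s0 by auto
  note same_sign = v_same_sign_where_E_pos[OF sol onM s0 \<open>0 < E s0\<close>]
  \<comment> \<open>The hypothesis gives \<open>w = v s0 * u \<ge> 0\<close> at points arbitrarily close to \<open>A\<close>, and \<open>w\<close> is
    nondecreasing, hence \<open>0 \<le> w \<le> w s0\<close> on \<open>]A, s0]\<close>.\<close>
  let ?w = "\<lambda>s. v s0 * u s"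
  note mono = mono_on_v_mult_u_where_E_pos[OF sol onM s0 \<open>0 < E s0\<close>]
  have "t \<in> {A<..0}"
    using t J by blast
  then obtain s where s: "s \<in> {A<..t}" and "0 \<le> v s * u s"
    using freq by blast
  then have "0 \<le> (v s0 * v s) * (v s * u s)"
    using same_sign[of s] t by simp
  then have "0 \<le> (v s)\<^sup>2 * ?w s"
    by (simp add: power2_eq_square algebra_simps)
  moreover have "v s \<noteq> 0"
    using same_sign[of s] s t by auto
  ultimately have "0 \<le> ?w s"
    by (simp add: zero_le_mult_iff)
  also have "?w s \<le> ?w t"
    using mono s t by (auto intro: mono_onD)
  finally have "0 \<le> ?w t" .
  moreover have "?w t \<le> ?w s0"
    using mono s0 t by (auto intro: mono_onD)
  ultimately have "(?w t)\<^sup>2 \<le> (?w s0)\<^sup>2"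
    by (simp add: power_mono)
  moreover have "v s0 \<noteq> 0"
    using same_sign[OF t] by auto
  ultimately show ?thesis
    by (simp add: power_mult_distrib)
qed

lemma K_nonneg: "0 \<le> K"
  using damp_nonneg damp_le order.trans by blast

lemma damp_mult_v_sq_le:
  assumes onM: "on_M A u v E" and s: "s \<in> {A<..0}" and "0 < E s" and "(u s)\<^sup>2 \<le> W"
  shows "damp (u s) * (4 * (v s)\<^sup>2) \<le> 2 * K * (1 + W * E s)"
proof -
  have "E s * (u s)\<^sup>2 \<le> E s * W"
    using \<open>0 < E s\<close> \<open>(u s)\<^sup>2 \<le> W\<close> by (intro mult_left_mono) auto
  then have v_sq: "4 * (v s)\<^sup>2 \<le> 2 * (1 + W * E s)"
    using on_MD[OF onM s] by (simp add: algebra_simps)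
  have "damp (u s) * (4 * (v s)\<^sup>2) \<le> K * (2 * (1 + W * E s))"
    by (rule mult_mono[OF damp_le v_sq K_nonneg]) simp
  then show ?thesis
    by (simp add: algebra_simps)
qed

lemma E_le_where_u_sq_le:
  assumes sol: "is_sol \<delta> A u v E" and onM: "on_M A u v E" and s0: "s0 \<in> {A<..0}"
    and E_pos: "\<And>t. t \<in> {A<..s0} \<Longrightarrow> 0 < E t"
    and u_sq: "\<And>t. t \<in> {A<..s0} \<Longrightarrow> (u t)\<^sup>2 \<le> W" and "1 \<le> W"
    and t: "t \<in> {A<..s0}"
  shows "E t \<le> (1 + W * E s0) * exp (2 * K * W * (s0 - A))"
proof -
  have J: "{A<..s0} \<subseteq> {A<..0}"
    using s0 by auto
  have "1 + W * E t \<le> (1 + W * E s0) * exp (2 * K * W * (s0 - t))"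
  proof (rule gronwall_backward)
    show "((\<lambda>t. 1 + W * E t) has_real_derivative W * (- 4 * damp (u s) * (v s)\<^sup>2))
        (at s within {A<..s0})" if "s \<in> {A<..s0}" for s
    proof -
      have "s \<in> {A<..0}"
        using that J by blast
      from has_field_derivative_subset[OF is_solD(3)[OF sol this] J] show ?thesis
        by (auto intro!: derivative_eq_intros)
    qed
    show "- (2 * K * W) * (1 + W * E s) \<le> W * (- 4 * damp (u s) * (v s)\<^sup>2)"
      if s: "s \<in> {A<..s0}" for s
    proof -
      have "W * (damp (u s) * (4 * (v s)\<^sup>2)) \<le> W * (2 * K * (1 + W * E s))"
        using damp_mult_v_sq_le[OF onM _ E_pos[OF s] u_sq[OF s]] s J \<open>1 \<le> W\<close>
        by (intro mult_left_mono) auto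
      then show ?thesis
        by (simp add: algebra_simps)
    qed
  qed (use t in auto)
  also have "\<dots> \<le> (1 + W * E s0) * exp (2 * K * W * (s0 - A))"
  proof -
    have "2 * K * W * (s0 - t) \<le> 2 * K * W * (s0 - A)"
      using t K_nonneg \<open>1 \<le> W\<close> by (intro mult_left_mono) auto
    moreover have "0 \<le> 1 + W * E s0"
      using E_pos[of s0] s0 \<open>1 \<le> W\<close> by (simp add: add_nonneg_nonneg)
    ultimately show ?thesis
      by (intro mult_left_mono) simp_all
  qed
  finally have "1 + W * E t \<le> (1 + W * E s0) * exp (2 * K * W * (s0 - A))" .
  moreover have "1 * E t \<le> W * E t"
    using E_pos[OF t] \<open>1 \<le> W\<close> by (intro mult_right_mono) auto
  ultimately show ?thesis
    by linarith
qed

lemma E_bdd_above_if_frequently_nonneg: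
  assumes sol: "is_sol \<delta> A u v E" and onM: "on_M A u v E"
    and freq: "\<And>s1. s1 \<in> {A<..0} \<Longrightarrow> \<exists>s\<in>{A<..s1}. 0 \<le> v s * u s"
  obtains B where "\<And>s. s \<in> {A<..0} \<Longrightarrow> E s \<le> B"
proof (cases "\<exists>s0\<in>{A<..0}. 0 < E s0")
  case False
  then show ?thesis
    using that[of 0] by (auto simp: not_less)
next
  case True
  then obtain s0 where s0: "s0 \<in> {A<..0}" and "0 < E s0"
    by blast
  have E_mono: "E s \<le> E s'" if "s \<in> {A<..0}" "s' \<in> {A<..0}" "s' \<le> s" for s s'
    using E_antimono[OF sol] that by (auto simp: monotone_on_def)
  define W where "W = 1 + (u s0)\<^sup>2"
  define B where "B = (1 + W * E s0) * exp (2 * K * W * (s0 - A))"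
  have "E t \<le> B" if "t \<in> {A<..s0}" for t
    unfolding B_def
  proof (rule E_le_where_u_sq_le[OF sol onM s0 _ _ _ that])
    show "0 < E t" if "t \<in> {A<..s0}" for t
      using E_mono[of s0 t] s0 that \<open>0 < E s0\<close> by force
    show "(u t)\<^sup>2 \<le> W" if "t \<in> {A<..s0}" for t
      using u_sq_le_where_E_pos[OF sol onM s0 \<open>0 < E s0\<close> freq that] by (simp add: W_def)
  qed (simp add: W_def)
  moreover have "E t \<le> E s0" if "t \<in> {A<..0}" "s0 \<le> t" for t
    using E_mono that s0 by blast
  ultimately show ?thesis
    using that[of "max B (E s0)"] by (meson greaterThanAtMost_iff le_max_iff_disj linorder_le_cases)
qed

end

theorem lemma9p2:
  fixes \<delta> \<delta>' :: "real \<Rightarrow> real" and A :: real and u v E :: "real \<Rightarrow> real"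
  assumes nonneg: "\<forall>r>0. \<delta> r \<ge> 0"
    and bounded: "\<exists>K. \<forall>r>0. \<bar>\<delta> r\<bar> \<le> K"
    and deriv: "\<forall>r>0. (\<delta> has_real_derivative \<delta>' r) (at r)"
    and cont_deriv: "continuous_on {0<..} \<delta>'"
    and lim0: "((\<lambda>r. sqrt r * \<delta>' r) \<longlongrightarrow> 0) (at_right 0)"
    and A_neg: "A < 0"
    and sol: "is_sol \<delta> A u v E"
    and onM: "on_M A u v E"
    and maxl: "maximal_left \<delta> A u v E"
  shows "\<exists>s1\<in>{A<..0}. \<forall>s\<in>{A<..s1}. v s * u s < 0"
proof (rule ccontr)
  assume "\<not> (\<exists>s1\<in>{A<..0}. \<forall>s\<in>{A<..s1}. v s * u s < 0)"
  then have freq: "\<And>s1. s1 \<in> {A<..0} \<Longrightarrow> \<exists>s\<in>{A<..s1}. 0 \<le> v s * u s"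
    by (auto simp: not_less)
  obtain K where "\<forall>r>0. \<bar>\<delta> r\<bar> \<le> K"
    using bounded ..
  then interpret damping \<delta> \<delta>' K
    using nonneg deriv cont_deriv lim0 by unfold_locales
  obtain B where "\<And>s. s \<in> {A<..0} \<Longrightarrow> E s \<le> B"
    using E_bdd_above_if_frequently_nonneg[OF sol onM freq] by blast
  then have "bounded ((\<lambda>s. (u s, v s, E s)) ` {A<..0})"
    by (rule bounded_if_E_bdd_above[OF A_neg sol onM])
  with maximal_left_imp_unbounded[OF A_neg sol maxl] show False ..
qed

end
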